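(* Let $X$ be a set and $f:X\to X$ a map. The functional Alexandroff topology on $X$ associated to $f$ is uniformizable if and only if $\mathrm{Per}(f)=X$.
   Context: For $a\in X$, $V_f(a):=\{x\in X:\exists n\ge0,\ f^n(x)=a\}$; the functional Alexandroff topology associated to $f$ is the topology on $X$ with basis $\{V_f(a):a\in X\}$. $\mathrm{Per}(f)=\{x\in X:\exists n\ge1,\ f^n(x)=x\}$. A topology is uniformizable if it is induced by some uniform structure on $X$. *)

theory Defs
  imports "HOL-Analysis.Analysis"
begin

definition Vf :: "'a set \<Rightarrow> ('a \<Rightarrow> 'a) \<Rightarrow> 'a \<Rightarrow> 'a set" where
  "Vf X f a = {x \<in> X. \<exists>n::nat. (f ^^ n) x = a}"

definition alex_top :: "'a set \<Rightarrow> ('a \<Rightarrow> 'a) \<Rightarrow> 'a topology" where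
  "alex_top X f = topology (\<lambda>U. \<exists>\<B>. \<B> \<subseteq> Vf X f ` X \<and> U = \<Union>\<B>)"

definition Per :: "'a set \<Rightarrow> ('a \<Rightarrow> 'a) \<Rightarrow> 'a set" where
  "Per X f = {x \<in> X. \<exists>n::nat. n \<ge> 1 \<and> (f ^^ n) x = x}"

definition uniformity_on :: "'a set \<Rightarrow> ('a \<times> 'a) set set \<Rightarrow> bool" where
  "uniformity_on X \<Phi> \<longleftrightarrow>
     \<Phi> \<noteq> {} \<and>
     (\<forall>U\<in>\<Phi>. U \<subseteq> X \<times> X \<and> Id_on X \<subseteq> U) \<and>
     (\<forall>U\<in>\<Phi>. \<forall>V. U \<subseteq> V \<and> V \<subseteq> X \<times> X \<longrightarrow> V \<in> \<Phi>) \<and>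
     (\<forall>U\<in>\<Phi>. \<forall>V\<in>\<Phi>. U \<inter> V \<in> \<Phi>) \<and>
     (\<forall>U\<in>\<Phi>. U\<inverse> \<in> \<Phi>) \<and>
     (\<forall>U\<in>\<Phi>. \<exists>V\<in>\<Phi>. V O V \<subseteq> U)"

definition uniformizable :: "'a topology \<Rightarrow> bool" where
  "uniformizable T \<longleftrightarrow>
     (\<exists>\<Phi>. uniformity_on (topspace T) \<Phi> \<and>
        (\<forall>G. openin T G \<longleftrightarrow>
               G \<subseteq> topspace T \<and> (\<forall>x\<in>G. \<exists>U\<in>\<Phi>. {y. (x, y) \<in> U} \<subseteq> G)))"

end

theory Submission
  imports Defs
begin

text \<open>The open sets of the functional Alexandroff topology are the subsets of X that are closed
  under taking f-preimages, so V_f(a) is the smallest open set containing a. Uniform spaces are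
  R0 (if every neighbourhood of b contains a, then every neighbourhood of a contains b); applied
  to b = f a this forces f a to lie in V_f(a), i.e. a is periodic. Conversely, if every point is
  periodic, then lying on a common orbit is an equivalence relation whose classes are the
  V_f(a), and the partition topology of an equivalence relation E is induced by the uniformity
  of all supersets of E.\<close>

definition uniform_openin :: "'a set \<Rightarrow> ('a \<times> 'a) set set \<Rightarrow> 'a set \<Rightarrow> bool" where
  "uniform_openin X \<Phi> G \<longleftrightarrow> G \<subseteq> X \<and> (\<forall>x\<in>G. \<exists>U\<in>\<Phi>. {y. (x, y) \<in> U} \<subseteq> G)"

lemma uniformizable_iff_uniform_openin:
  "uniformizable T \<longleftrightarrow>
     (\<exists>\<Phi>. uniformity_on (topspace T) \<Phi> \<and> openin T = uniform_openin (topspace T) \<Phi>)"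
  by (simp add: uniformizable_def uniform_openin_def fun_eq_iff)

lemma
  assumes "uniformity_on X \<Phi>" and "U \<in> \<Phi>"
  shows uniformity_on_subset: "U \<subseteq> X \<times> X"
    and uniformity_on_Id_on: "Id_on X \<subseteq> U"
    and uniformity_on_converse: "U\<inverse> \<in> \<Phi>"
    and uniformity_on_comp: "\<exists>V\<in>\<Phi>. V O V \<subseteq> U"
proof -
  \<comment> \<open>the upward-closure axiom is kept out of the context: as a rewrite rule it makes simp loop\<close>
  have "(\<forall>U\<in>\<Phi>. U \<subseteq> X \<times> X \<and> Id_on X \<subseteq> U) \<and> (\<forall>U\<in>\<Phi>. U\<inverse> \<in> \<Phi>) \<and>
      (\<forall>U\<in>\<Phi>. \<exists>V\<in>\<Phi>. V O V \<subseteq> U)"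
    using assms(1) unfolding uniformity_on_def by (elim conjE) (intro conjI; assumption)
  with assms(2) show "U \<subseteq> X \<times> X" "Id_on X \<subseteq> U" "U\<inverse> \<in> \<Phi>" "\<exists>V\<in>\<Phi>. V O V \<subseteq> U"
    by blast+
qed

lemma uniform_openin_uniform_interior:
  assumes "uniformity_on X \<Phi>"
  shows "uniform_openin X \<Phi> {y \<in> X. \<exists>W\<in>\<Phi>. {z. (y, z) \<in> W} \<subseteq> S}"
    (is "uniform_openin X \<Phi> ?I")
  unfolding uniform_openin_def
proof (intro conjI ballI)
  show "?I \<subseteq> X" by blast
  fix y assume "y \<in> ?I"
  then obtain W where W: "W \<in> \<Phi>" "{z. (y, z) \<in> W} \<subseteq> S" by blast
  obtain V where V: "V \<in> \<Phi>" "V O V \<subseteq> W"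
    using uniformity_on_comp[OF assms W(1)] by blast
  have "{z. (y, z) \<in> V} \<subseteq> ?I"
  proof
    fix z assume z: "z \<in> {z. (y, z) \<in> V}"
    then have "{w. (z, w) \<in> V} \<subseteq> S"
      using V(2) W(2) by blast
    moreover have "z \<in> X"
      using z uniformity_on_subset[OF assms V(1)] by blast
    ultimately show "z \<in> ?I"
      using V(1) by blast
  qed
  with V(1) show "\<exists>U\<in>\<Phi>. {z. (y, z) \<in> U} \<subseteq> ?I" by blast
qed

lemma uniform_openin_specializes_sym:
  assumes unif: "uniformity_on X \<Phi>" and "b \<in> X"
    and b_a: "\<And>H. uniform_openin X \<Phi> H \<Longrightarrow> b \<in> H \<Longrightarrow> a \<in> H"
    and G: "uniform_openin X \<Phi> G" "a \<in> G"
  shows "b \<in> G"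
proof -
  obtain U where U: "U \<in> \<Phi>" "{y. (a, y) \<in> U} \<subseteq> G"
    using G unfolding uniform_openin_def by blast
  define I where "I = {y \<in> X. \<exists>W\<in>\<Phi>. {z. (y, z) \<in> W} \<subseteq> {z. (b, z) \<in> U\<inverse>}}"
  have "b \<in> I"
    unfolding I_def using \<open>b \<in> X\<close> uniformity_on_converse[OF unif U(1)] by blast
  then have "a \<in> I"
    unfolding I_def by (rule b_a[OF uniform_openin_uniform_interior[OF unif], unfolded I_def])
  then obtain W where W: "W \<in> \<Phi>" "{z. (a, z) \<in> W} \<subseteq> {z. (b, z) \<in> U\<inverse>}" "a \<in> X"
    unfolding I_def by blast
  have "(a, a) \<in> W"
    using uniformity_on_Id_on[OF unif W(1)] W(3) by blast
  with W(2) U(2) show "b \<in> G" by blast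
qed

lemma uniformizable_specializes_sym:
  assumes "uniformizable T" "b \<in> topspace T"
    and "\<And>H. openin T H \<Longrightarrow> b \<in> H \<Longrightarrow> a \<in> H"
    and "openin T G" "a \<in> G"
  shows "b \<in> G"
proof -
  obtain \<Phi> where unif: "uniformity_on (topspace T) \<Phi>"
    and open_eq: "openin T = uniform_openin (topspace T) \<Phi>"
    using assms(1) unfolding uniformizable_iff_uniform_openin by blast
  from assms(3-5) show ?thesis
    unfolding open_eq by (rule uniform_openin_specializes_sym[OF unif assms(2)])
qed

lemma uniformity_on_equiv_supersets:
  assumes "equiv X E"
  shows "uniformity_on X {U. E \<subseteq> U \<and> U \<subseteq> X \<times> X}" (is "uniformity_on X ?\<Phi>")
  unfolding uniformity_on_def
proof (intro conjI)
  from assms obtain "E \<subseteq> X \<times> X" "refl_on X E" "sym E" "trans E"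
    by (rule equivE)
  then have E_in: "E \<in> ?\<Phi>" by simp
  then show "?\<Phi> \<noteq> {}" by blast
  have "Id_on X \<subseteq> E"
    using \<open>refl_on X E\<close> unfolding refl_on_def by auto
  then show "\<forall>U\<in>?\<Phi>. U \<subseteq> X \<times> X \<and> Id_on X \<subseteq> U" by blast
  show "\<forall>U\<in>?\<Phi>. \<forall>V. U \<subseteq> V \<and> V \<subseteq> X \<times> X \<longrightarrow> V \<in> ?\<Phi>" by blast
  show "\<forall>U\<in>?\<Phi>. \<forall>V\<in>?\<Phi>. U \<inter> V \<in> ?\<Phi>" by blast
  show "\<forall>U\<in>?\<Phi>. U\<inverse> \<in> ?\<Phi>"
  proof
    fix U assume "U \<in> ?\<Phi>"
    then have "E\<inverse> \<subseteq> U\<inverse>" "U\<inverse> \<subseteq> X \<times> X" by auto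
    with \<open>sym E\<close> show "U\<inverse> \<in> ?\<Phi>" by (simp add: sym_conv_converse_eq)
  qed
  show "\<forall>U\<in>?\<Phi>. \<exists>V\<in>?\<Phi>. V O V \<subseteq> U"
  proof
    fix U assume "U \<in> ?\<Phi>"
    then have "E O E \<subseteq> U" using trans_O_subset[OF \<open>trans E\<close>] by blast
    with E_in show "\<exists>V\<in>?\<Phi>. V O V \<subseteq> U" by blast
  qed
qed

lemma uniform_openin_equiv_supersets:
  assumes "equiv X E"
  shows "uniform_openin X {U. E \<subseteq> U \<and> U \<subseteq> X \<times> X} G \<longleftrightarrow> G \<subseteq> X \<and> (\<forall>x\<in>G. E``{x} \<subseteq> G)"
  unfolding uniform_openin_def using equiv_type[OF assms] by blast

lemma uniformizable_partition_topology:
  assumes "equiv (topspace T) E"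
    and "\<And>G. openin T G \<longleftrightarrow> G \<subseteq> topspace T \<and> (\<forall>x\<in>G. E``{x} \<subseteq> G)"
  shows "uniformizable T"
  unfolding uniformizable_iff_uniform_openin
proof (intro exI conjI)
  show "uniformity_on (topspace T) {U. E \<subseteq> U \<and> U \<subseteq> topspace T \<times> topspace T}"
    using assms(1) by (rule uniformity_on_equiv_supersets)
  show "openin T = uniform_openin (topspace T) {U. E \<subseteq> U \<and> U \<subseteq> topspace T \<times> topspace T}"
    using assms by (simp add: fun_eq_iff uniform_openin_equiv_supersets)
qed

lemma Vf_subset: "Vf X f a \<subseteq> X"
  unfolding Vf_def by auto

lemma Vf_refl: "a \<in> X \<Longrightarrow> a \<in> Vf X f a"
  unfolding Vf_def by (auto intro: exI[of _ 0])

lemma Vf_trans: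
  assumes "x \<in> Vf X f a"
  shows "Vf X f x \<subseteq> Vf X f a"
proof
  fix y assume "y \<in> Vf X f x"
  then obtain k where "y \<in> X" "(f ^^ k) y = x"
    unfolding Vf_def by blast
  moreover obtain n where "(f ^^ n) x = a"
    using assms unfolding Vf_def by blast
  ultimately have "y \<in> X" "(f ^^ (n + k)) y = a"
    by (simp_all add: funpow_add)
  then show "y \<in> Vf X f a"
    unfolding Vf_def by blast
qed

lemma Vf_step: "x \<in> X \<Longrightarrow> x \<in> Vf X f (f x)"
  unfolding Vf_def by (auto intro: exI[of _ 1])

lemma Per_if_in_Vf:
  assumes "a \<in> X" "f a \<in> Vf X f a"
  shows "a \<in> Per X f"
proof -
  obtain n where "(f ^^ n) (f a) = a"
    using assms(2) unfolding Vf_def by blast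
  then have "(f ^^ Suc n) a = a"
    by (simp only: funpow_Suc_right o_apply)
  with assms(1) show ?thesis
    unfolding Per_def by (intro CollectI conjI exI[of _ "Suc n"]) simp_all
qed

lemma funpow_mult_fixpoint: "(f ^^ p) y = y \<Longrightarrow> (f ^^ (p * k)) y = y"
  by (induction k) (simp_all add: funpow_add)

lemma Vf_sym_if_Per:
  assumes "x \<in> X" "y \<in> Vf X f x" "y \<in> Per X f"
  shows "x \<in> Vf X f y"
proof -
  obtain n where n: "(f ^^ n) y = x"
    using assms(2) unfolding Vf_def by blast
  obtain p where p: "p \<ge> 1" "(f ^^ p) y = y"
    using assms(3) unfolding Per_def by blast
  \<comment> \<open>going once more around the cycle of y from x = f^n(y) leads back to y\<close>
  have "(f ^^ ((p - 1) * n)) x = (f ^^ ((p - 1) * n + n)) y"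
    by (simp add: funpow_add n)
  also have "(p - 1) * n + n = p * n"
    using p(1) by (simp add: algebra_simps)
  finally have "(f ^^ ((p - 1) * n)) x = y"
    using funpow_mult_fixpoint[OF p(2)] by simp
  with assms(1) show ?thesis
    unfolding Vf_def by blast
qed

lemma union_of_Vf_iff:
  "(\<exists>\<B>. \<B> \<subseteq> Vf X f ` X \<and> U = \<Union>\<B>) \<longleftrightarrow> U \<subseteq> X \<and> (\<forall>x\<in>U. Vf X f x \<subseteq> U)"
proof
  assume "\<exists>\<B>. \<B> \<subseteq> Vf X f ` X \<and> U = \<Union>\<B>"
  then obtain \<B> where \<B>: "\<B> \<subseteq> Vf X f ` X" "U = \<Union>\<B>" by blast
  have "x \<in> X \<and> Vf X f x \<subseteq> U" if "x \<in> U" for x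
  proof -
    obtain a where "x \<in> Vf X f a" "Vf X f a \<in> \<B>"
      using \<B> \<open>x \<in> U\<close> by auto
    then show ?thesis
      using Vf_trans[of x X f a] Vf_subset[of X f a] \<B>(2) by auto
  qed
  then show "U \<subseteq> X \<and> (\<forall>x\<in>U. Vf X f x \<subseteq> U)" by auto
next
  assume U: "U \<subseteq> X \<and> (\<forall>x\<in>U. Vf X f x \<subseteq> U)"
  have "U \<subseteq> \<Union>(Vf X f ` U)"
    using U Vf_refl[of _ X f] by auto
  with U have "Vf X f ` U \<subseteq> Vf X f ` X \<and> U = \<Union>(Vf X f ` U)"
    by auto
  then show "\<exists>\<B>. \<B> \<subseteq> Vf X f ` X \<and> U = \<Union>\<B>" ..
qed

lemma openin_alex_top:
  "openin (alex_top X f) U \<longleftrightarrow> U \<subseteq> X \<and> (\<forall>x\<in>U. Vf X f x \<subseteq> U)"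
proof -
  have "istopology (\<lambda>U. U \<subseteq> X \<and> (\<forall>x\<in>U. Vf X f x \<subseteq> U))"
    unfolding istopology_def by blast
  then show ?thesis
    unfolding alex_top_def union_of_Vf_iff by simp
qed

lemma topspace_alex_top: "topspace (alex_top X f) = X"
proof (rule subset_antisym)
  show "topspace (alex_top X f) \<subseteq> X"
    using openin_topspace[of "alex_top X f"] unfolding openin_alex_top by (rule conjunct1)
  have "openin (alex_top X f) X"
    by (simp add: openin_alex_top Vf_subset)
  then show "X \<subseteq> topspace (alex_top X f)"
    by (rule openin_subset)
qed

lemma openin_alex_top_Vf: "openin (alex_top X f) (Vf X f a)"
  by (simp add: openin_alex_top Vf_subset Vf_trans)

lemma Vf_subset_if_openin: "openin (alex_top X f) H \<Longrightarrow> a \<in> H \<Longrightarrow> Vf X f a \<subseteq> H"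
  by (simp add: openin_alex_top)

lemma equiv_Vf_if_Per:
  assumes "Per X f = X"
  shows "equiv X {(x, y). x \<in> X \<and> y \<in> Vf X f x}"
proof (rule equivI)
  show "{(x, y). x \<in> X \<and> y \<in> Vf X f x} \<subseteq> X \<times> X"
    using Vf_subset by fast
  show "refl_on X {(x, y). x \<in> X \<and> y \<in> Vf X f x}"
    unfolding refl_on_def using Vf_refl by fast
  show "sym {(x, y). x \<in> X \<and> y \<in> Vf X f x}"
  proof (rule symI)
    fix x y assume "(x, y) \<in> {(x, y). x \<in> X \<and> y \<in> Vf X f x}"
    then have "x \<in> X" "y \<in> Vf X f x" "y \<in> X"
      using Vf_subset[of X f x] by auto
    then show "(y, x) \<in> {(x, y). x \<in> X \<and> y \<in> Vf X f x}"
      using Vf_sym_if_Per[of x X y f] assms by simp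
  qed
  show "trans {(x, y). x \<in> X \<and> y \<in> Vf X f x}"
    unfolding trans_def using Vf_trans by fast
qed

lemma Per_if_uniformizable_alex_top:
  assumes "f ` X \<subseteq> X" "uniformizable (alex_top X f)" "a \<in> X"
  shows "a \<in> Per X f"
proof -
  have "f a \<in> topspace (alex_top X f)"
    using assms by (auto simp: topspace_alex_top)
  moreover have "a \<in> H" if "openin (alex_top X f) H" "f a \<in> H" for H
    using Vf_subset_if_openin[OF that] Vf_step[OF \<open>a \<in> X\<close>] by blast
  ultimately have "f a \<in> Vf X f a"
    by (rule uniformizable_specializes_sym[OF assms(2) _ _ openin_alex_top_Vf Vf_refl[OF assms(3)]])
  with assms(3) show ?thesis
    by (rule Per_if_in_Vf)
qed

lemma uniformizable_alex_top_if_Per: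
  assumes "Per X f = X"
  shows "uniformizable (alex_top X f)"
proof -
  define E where "E = {(x, y). x \<in> X \<and> y \<in> Vf X f x}"
  have "E``{x} = Vf X f x" if "x \<in> X" for x
    using that unfolding E_def by auto
  then have "openin (alex_top X f) G \<longleftrightarrow> G \<subseteq> X \<and> (\<forall>x\<in>G. E``{x} \<subseteq> G)" for G
    unfolding openin_alex_top by (intro conj_cong refl ball_cong) (simp add: subsetD)
  moreover have "equiv X E"
    unfolding E_def using assms by (rule equiv_Vf_if_Per)
  ultimately show ?thesis
    by (intro uniformizable_partition_topology) (simp_all add: topspace_alex_top)
qed

theorem mainTheorem9:
  fixes X :: "'a set" and f :: "'a \<Rightarrow> 'a"
  assumes "f ` X \<subseteq> X"
  shows "uniformizable (alex_top X f) \<longleftrightarrow> Per X f = X"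
proof
  assume "uniformizable (alex_top X f)"
  then have "X \<subseteq> Per X f"
    using Per_if_uniformizable_alex_top[OF assms] by blast
  then show "Per X f = X"
    unfolding Per_def by blast
next
  assume "Per X f = X"
  then show "uniformizable (alex_top X f)"
    by (rule uniformizable_alex_top_if_Per)
qed

end
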